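(* Let $\rho\in\mathcal U_T$ satisfy $\limsup_{T\to\infty}\frac{\mu(T-\eta,\rho)}{\mu(T,\rho)}>0$ for every $\eta\ge0$. Let $f=g+h\in WPAAS^2(\mathbb R,L^2(P,H),\rho)$ with $g\in AS^2(\mathbb R,L^2(P,H))$ and $h^b\in SPAA_0(\mathbb R,L^2((0,1),L^2(P,H)),\rho)$. Then $\{g(t+\cdot):t\in\mathbb R\}\subset\overline{\{f(t+\cdot):t\in\mathbb R\}}$, where $g(t+\cdot),f(t+\cdot)$ are regarded as elements of $L^2((0,1),L^2(P,H))$ and the closure is taken in that space.
   Context: $H$ is a separable real Hilbert space, $(\Omega,\mathcal F,P)$ a complete probability space, and $L^2(P,H)$ the Banach space of $H$-valued random variables $x$ with $\mathbb E\|x\|^2<\infty$, normed by $\|x\|_2=(\mathbb E\|x\|^2)^{1/2}$. $\mathcal U$ is the set of positive locally integrable functions on $\mathbb R$; for $\rho\in\mathcal U$, $T>0$, $\mu(T,\rho)=\int_{-T}^T\rho(t)\,dt$; $\mathcal U_\infty=\{\rho\in\mathcal U:\lim_{T\to\infty}\mu(T,\rho)=\infty\}$; $\mathcal U_b=\{\rho\in\mathcal U_\infty:\rho$ bounded and $\inf_t\rho(t)>0\}$. For $\rho_1,\rho_2\in\mathcal U_\infty$, $\rho_1\sim\rho_2$ means $\rho_1/\rho_2\in\mathcal U_b$. For $s\in\mathbb R$, $\rho_s(t)=\rho(t+s)$, and $\mathcal U_T=\{\rho\in\mathcal U_\infty:\rho\sim\rho_s$ for all $s\in\mathbb R\}$.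 $BS^2(L^2(P,H))$ is the space of processes $x\in L^2_{loc}(\mathbb R,L^2(P,H))$ with $\|x\|_{S^2}=\sup_{t\in\mathbb R}(\int_t^{t+1}\mathbb E\|x(\tau)\|^2d\tau)^{1/2}<\infty$. A process $x\in L^2_{loc}(\mathbb R,L^2(P,H))$ is $S^2$-almost automorphic if every real sequence $(s_n')$ has a subsequence $(s_n)$ and $y\in L^2_{loc}(\mathbb R,L^2(P,H))$ with $\int_t^{t+1}\mathbb E\|x(s+s_n)-y(s)\|^2ds\to0$ and $\int_t^{t+1}\mathbb E\|y(s-s_n)-x(s)\|^2ds\to0$ for each $t\in\mathbb R$; the set is $AS^2(\mathbb R,L^2(P,H))$. $WPAAS^2(\mathbb R,L^2(P,H),\rho)$ ($S^2$-weighted pseudo almost automorphic processes) is the set of $f\in BS^2(L^2(P,H))$ of the form $f=g+h$ with $g\in AS^2(\mathbb R,L^2(P,H))$ and $h$ satisfying $\lim_{T\to\infty}\frac{1}{\mu(T,\rho)}\int_{-T}^T(\int_t^{t+1}\mathbb E\|h(s)\|^2ds)^{1/2}\rho(t)\,dt=0$ (written $h^b\in SPAA_0(\mathbb R,L^2((0,1),L^2(P,H)),\rho)$, where $h^b(t,s)=h(t+s)$ is the Bochner transform). *)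

theory Defs
  imports "HOL-Probability.Probability"
begin

definition mu :: "real \<Rightarrow> (real \<Rightarrow> real) \<Rightarrow> real" where
  "mu T \<rho> = (LINT t:{-T..T}|lborel. \<rho> t)"

definition U_set :: "(real \<Rightarrow> real) set" where
  "U_set = {\<rho>. (\<forall>t. 0 < \<rho> t) \<and> (\<forall>a b. set_integrable lborel {a..b} \<rho>)}"

definition U_inf :: "(real \<Rightarrow> real) set" where
  "U_inf = {\<rho>. \<rho> \<in> U_set \<and> filterlim (\<lambda>T. mu T \<rho>) at_top at_top}"

definition U_b :: "(real \<Rightarrow> real) set" where
  "U_b = {\<rho>. \<rho> \<in> U_inf \<and> bdd_above (range \<rho>) \<and> (INF t. \<rho> t) > 0}"

definition weight_equiv :: "(real \<Rightarrow> real) \<Rightarrow> (real \<Rightarrow> real) \<Rightarrow> bool" where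
  "weight_equiv \<rho>1 \<rho>2 \<longleftrightarrow> \<rho>1 \<in> U_inf \<and> \<rho>2 \<in> U_inf \<and> (\<lambda>t. \<rho>1 t / \<rho>2 t) \<in> U_b"

definition U_T :: "(real \<Rightarrow> real) set" where
  "U_T = {\<rho>. \<rho> \<in> U_inf \<and> (\<forall>s. weight_equiv \<rho> (\<lambda>t. \<rho> (t + s)))}"

definition sq_int :: "'w measure \<Rightarrow> (real \<Rightarrow> 'w \<Rightarrow> 'h::real_normed_vector) \<Rightarrow> real \<Rightarrow> real \<Rightarrow> ennreal" where
  "sq_int M x a b = (\<integral>\<^sup>+ s\<in>{a..b}. (\<integral>\<^sup>+ \<omega>. ennreal ((norm (x s \<omega>))\<^sup>2) \<partial>M) \<partial>lborel)"

definition L2loc :: "'w measure \<Rightarrow> (real \<Rightarrow> 'w \<Rightarrow> 'h::real_normed_vector) \<Rightarrow> bool" where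
  "L2loc M x \<longleftrightarrow> (\<lambda>(s, \<omega>). x s \<omega>) \<in> borel_measurable (lborel \<Otimes>\<^sub>M M)
      \<and> (\<forall>t. sq_int M x t (t + 1) < \<infinity>)"

definition BS2 :: "'w measure \<Rightarrow> (real \<Rightarrow> 'w \<Rightarrow> 'h::real_normed_vector) \<Rightarrow> bool" where
  "BS2 M x \<longleftrightarrow> L2loc M x \<and> (\<exists>B::real. \<forall>t. sq_int M x t (t + 1) \<le> ennreal B)"

definition AS2 :: "'w measure \<Rightarrow> (real \<Rightarrow> 'w \<Rightarrow> 'h::real_normed_vector) \<Rightarrow> bool" where
  "AS2 M x \<longleftrightarrow> L2loc M x \<and>
    (\<forall>s' :: nat \<Rightarrow> real. \<exists>r :: nat \<Rightarrow> nat. \<exists>y. strict_mono r \<and> L2loc M y \<and>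
       (\<forall>t. ((\<lambda>n. sq_int M (\<lambda>s \<omega>. x (s + s' (r n)) \<omega> - y s \<omega>) t (t + 1)) \<longlongrightarrow> 0) sequentially) \<and>
       (\<forall>t. ((\<lambda>n. sq_int M (\<lambda>s \<omega>. y (s - s' (r n)) \<omega> - x s \<omega>) t (t + 1)) \<longlongrightarrow> 0) sequentially))"

text \<open>Ergodic (weighted mean zero) condition on h, i.e. h^b in SPAA_0(rho).\<close>
definition SPAA0 :: "'w measure \<Rightarrow> (real \<Rightarrow> real) \<Rightarrow> (real \<Rightarrow> 'w \<Rightarrow> 'h::real_normed_vector) \<Rightarrow> bool" where
  "SPAA0 M \<rho> h \<longleftrightarrow>
    ((\<lambda>T. (\<integral>\<^sup>+ t\<in>{-T..T}. ennreal (sqrt (enn2real (sq_int M h t (t + 1))) * \<rho> t) \<partial>lborel)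
           / ennreal (mu T \<rho>)) \<longlongrightarrow> 0) at_top"

definition WPAAS2 :: "'w measure \<Rightarrow> (real \<Rightarrow> real) \<Rightarrow> (real \<Rightarrow> 'w \<Rightarrow> 'h::real_normed_vector) \<Rightarrow> bool" where
  "WPAAS2 M \<rho> f \<longleftrightarrow> BS2 M f \<and>
     (\<exists>g h. AS2 M g \<and> SPAA0 M \<rho> h \<and> (\<forall>t \<omega>. f t \<omega> = g t \<omega> + h t \<omega>))"

end

theory Submission
  imports Defs
begin

(* The proof is by contradiction: suppose g(s + .) stays at distance >= eps from all f(t + .).
   (1) Almost automorphy makes the translates of g close to g(s + .) relatively dense: every
       interval of length 2L contains some tau with g(tau + .) eps/4-close to g(s + .).
   (2) For such tau, h(tau + .) = f(tau + .) - g(tau + .) must be large, so the local norm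
       int_t^(t+1) E||h||^2 is >= eps/8 for all t in an interval of length 1/2 near tau.
   (3) Hence every block [kP, (k+1)P], P = 2L + 3, contains such a half interval.
   (4) Since rho is equivalent to all its translates, the rho-weight of a block is controlled
       by the rho-weight of any half interval in it; summing over the blocks inside [-T,T]
       gives int_(-T)^T ||h||_S2 rho >= kappa mu(T - P).
   (5) The ergodicity of h then forces mu(T - P)/mu(T) -> 0, contradicting the Limsup
       hypothesis.
*)

abbreviation jointly_measurable :: "'w measure \<Rightarrow> (real \<Rightarrow> 'w \<Rightarrow> 'h::real_normed_vector) \<Rightarrow> bool" where
  "jointly_measurable M x \<equiv> (\<lambda>(s, \<omega>). x s \<omega>) \<in> borel_measurable (lborel \<Otimes>\<^sub>M M)"

lemma jointly_measurable_shift: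
  assumes "jointly_measurable M x"
  shows "jointly_measurable M (\<lambda>r \<omega>. x (c + r) \<omega>)"
proof -
  have "(\<lambda>(r, \<omega>). (c + r, \<omega>)) \<in> measurable (lborel \<Otimes>\<^sub>M M) (lborel \<Otimes>\<^sub>M M)"
    by (auto intro!: measurable_Pair simp: split_beta')
  from measurable_comp[OF this assms] show ?thesis by (simp add: comp_def split_beta')
qed

lemma jointly_measurable_diff:
  fixes x y :: "real \<Rightarrow> 'w \<Rightarrow> 'h::{real_normed_vector, second_countable_topology}"
  assumes "jointly_measurable M x" "jointly_measurable M y"
  shows "jointly_measurable M (\<lambda>r \<omega>. x r \<omega> - y r \<omega>)"
  using borel_measurable_diff[OF assms] by (simp add: split_beta')

text \<open>By Tonelli, the time integrand s \<mapsto> E||x(s)||^2 of sq_int is Borel measurable.\<close>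
lemma expected_sq_norm_measurable:
  fixes x :: "real \<Rightarrow> 'w \<Rightarrow> 'h::{real_normed_vector, second_countable_topology}"
  assumes "sigma_finite_measure M" "jointly_measurable M x"
  shows "(\<lambda>s. \<integral>\<^sup>+ \<omega>. ennreal ((norm (x s \<omega>))\<^sup>2) \<partial>M) \<in> borel_measurable lborel"
proof -
  interpret sigma_finite_measure M by fact
  have "(\<lambda>(s, \<omega>). ennreal ((norm (x s \<omega>))\<^sup>2)) \<in> borel_measurable (lborel \<Otimes>\<^sub>M M)"
    using assms(2) by measurable
  then show ?thesis using borel_measurable_nn_integral by simp
qed

text \<open>Translation invariance of Lebesgue measure: shifting the process shifts the window.\<close>
lemma sq_int_shift:
  fixes x :: "real \<Rightarrow> 'w \<Rightarrow> 'h::{real_normed_vector, second_countable_topology}"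
  assumes "sigma_finite_measure M" "jointly_measurable M x"
  shows "sq_int M (\<lambda>r \<omega>. x (c + r) \<omega>) a b = sq_int M x (c + a) (c + b)"
proof -
  define \<phi> where "\<phi> = (\<lambda>s. \<integral>\<^sup>+ \<omega>. ennreal ((norm (x s \<omega>))\<^sup>2) \<partial>M)"
  have \<phi>_meas: "\<phi> \<in> borel_measurable borel"
    using expected_sq_norm_measurable[OF assms] unfolding \<phi>_def by simp
  have "sq_int M x (c + a) (c + b) = (\<integral>\<^sup>+ s. \<phi> s * indicator {c + a..c + b} s \<partial>lborel)"
    unfolding sq_int_def \<phi>_def by simp
  also have "\<dots> = (\<integral>\<^sup>+ r. \<phi> (c + r) * indicator {c + a..c + b} (c + r) \<partial>lborel)"
    using nn_integral_real_affine[of "\<lambda>s. \<phi> s * indicator {c + a..c + b} s" 1 c] \<phi>_meas by simp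
  also have "\<dots> = (\<integral>\<^sup>+ r. \<phi> (c + r) * indicator {a..b} r \<partial>lborel)"
    by (intro nn_integral_cong) (auto simp: indicator_def)
  finally show ?thesis unfolding sq_int_def \<phi>_def by simp
qed

lemma sq_int_mono_interval:
  assumes "a \<le> a'" "b' \<le> b"
  shows "sq_int M x a' b' \<le> sq_int M x a b"
  unfolding sq_int_def using assms by (intro nn_integral_mono) (auto simp: indicator_def)

lemma sq_int_cong_norm:
  assumes "\<And>s \<omega>. norm (x s \<omega>) = norm (y s \<omega>)"
  shows "sq_int M x a b = sq_int M y a b"
  unfolding sq_int_def using assms by simp

lemma sq_norm_diff_le:
  fixes a b c :: "'h::real_normed_vector"
  shows "ennreal ((norm (a - c))\<^sup>2) \<le> 2 * ennreal ((norm (a - b))\<^sup>2) + 2 * ennreal ((norm (b - c))\<^sup>2)"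
proof -
  have "norm (a - c) \<le> norm (a - b) + norm (b - c)"
    using norm_triangle_ineq[of "a - b" "b - c"] by simp
  then have "(norm (a - c))\<^sup>2 \<le> (norm (a - b) + norm (b - c))\<^sup>2" by (simp add: power_mono)
  also have "\<dots> \<le> 2 * (norm (a - b))\<^sup>2 + 2 * (norm (b - c))\<^sup>2"
    by (smt (verit) sum_squares_ge_zero power2_sum power2_diff zero_le_power2)
  finally have "ennreal ((norm (a - c))\<^sup>2) \<le> ennreal (2 * (norm (a - b))\<^sup>2 + 2 * (norm (b - c))\<^sup>2)"
    by (rule ennreal_leI)
  then show ?thesis by (simp add: ennreal_plus ennreal_mult)
qed

lemma sq_int_triangle:
  fixes x y z :: "real \<Rightarrow> 'w \<Rightarrow> 'h::{real_normed_vector, second_countable_topology}"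
  assumes sf: "sigma_finite_measure M"
    and "jointly_measurable M x" "jointly_measurable M y" "jointly_measurable M z"
  shows "sq_int M (\<lambda>s \<omega>. x s \<omega> - z s \<omega>) a b \<le>
     2 * sq_int M (\<lambda>s \<omega>. x s \<omega> - y s \<omega>) a b + 2 * sq_int M (\<lambda>s \<omega>. y s \<omega> - z s \<omega>) a b"
proof -
  define E where "E = (\<lambda>u::real \<Rightarrow> 'w \<Rightarrow> 'h. \<lambda>s. \<integral>\<^sup>+ \<omega>. ennreal ((norm (u s \<omega>))\<^sup>2) \<partial>M)"
  define xy where "xy = (\<lambda>s \<omega>. x s \<omega> - y s \<omega>)"
  define yz where "yz = (\<lambda>s \<omega>. y s \<omega> - z s \<omega>)"
  have xy_meas: "jointly_measurable M xy" and yz_meas: "jointly_measurable M yz"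
    using assms unfolding xy_def yz_def by (auto intro: jointly_measurable_diff)
  have pointwise: "E (\<lambda>s \<omega>. x s \<omega> - z s \<omega>) s \<le> 2 * E xy s + 2 * E yz s" for s
  proof -
    have "(\<lambda>\<omega>. ennreal ((norm (xy s \<omega>))\<^sup>2)) \<in> borel_measurable M"
      "(\<lambda>\<omega>. ennreal ((norm (yz s \<omega>))\<^sup>2)) \<in> borel_measurable M"
      using measurable_Pair2[OF xy_meas, of s] measurable_Pair2[OF yz_meas, of s] by simp_all
    moreover have "E (\<lambda>s \<omega>. x s \<omega> - z s \<omega>) s
        \<le> (\<integral>\<^sup>+ \<omega>. 2 * ennreal ((norm (xy s \<omega>))\<^sup>2) + 2 * ennreal ((norm (yz s \<omega>))\<^sup>2) \<partial>M)"
      unfolding E_def xy_def yz_def by (intro nn_integral_mono sq_norm_diff_le)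
    ultimately show ?thesis unfolding E_def by (simp add: nn_integral_add nn_integral_cmult)
  qed
  have "E xy \<in> borel_measurable lborel" "E yz \<in> borel_measurable lborel"
    unfolding E_def using expected_sq_norm_measurable[OF sf] xy_meas yz_meas by auto
  moreover have "sq_int M (\<lambda>s \<omega>. x s \<omega> - z s \<omega>) a b
      \<le> (\<integral>\<^sup>+ s. 2 * (E xy s * indicator {a..b} s) + 2 * (E yz s * indicator {a..b} s) \<partial>lborel)"
    unfolding sq_int_def
    by (intro nn_integral_mono) (use pointwise in \<open>auto simp: E_def indicator_def\<close>)
  ultimately show ?thesis
    unfolding sq_int_def E_def xy_def yz_def by (simp add: nn_integral_add nn_integral_cmult)
qed

lemma sq_int_shift_diff:
  fixes x y :: "real \<Rightarrow> 'w \<Rightarrow> 'h::{real_normed_vector, second_countable_topology}"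
  assumes "sigma_finite_measure M" "jointly_measurable M x" "jointly_measurable M y"
  shows "sq_int M (\<lambda>r \<omega>. x (c + r + p) \<omega> - y (c + r + q) \<omega>) 0 1
    = sq_int M (\<lambda>u \<omega>. x (u + p) \<omega> - y (u + q) \<omega>) c (c + 1)"
proof -
  have "jointly_measurable M (\<lambda>u \<omega>. x (u + p) \<omega> - y (u + q) \<omega>)"
    using jointly_measurable_diff[OF jointly_measurable_shift[OF assms(2), of p]
        jointly_measurable_shift[OF assms(3), of q]]
    by (simp add: add.commute)
  from sq_int_shift[OF assms(1) this, of c 0 1] show ?thesis by simp
qed

lemma sq_int_split:
  fixes x :: "real \<Rightarrow> 'w \<Rightarrow> 'h::{real_normed_vector, second_countable_topology}"
  assumes "sigma_finite_measure M" "jointly_measurable M x"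
  shows "sq_int M x a c \<le> sq_int M x a b + sq_int M x b c"
proof -
  define E where "E = (\<lambda>s. \<integral>\<^sup>+ \<omega>. ennreal ((norm (x s \<omega>))\<^sup>2) \<partial>M)"
  have "E \<in> borel_measurable lborel"
    unfolding E_def by (rule expected_sq_norm_measurable[OF assms])
  moreover have "sq_int M x a c \<le> (\<integral>\<^sup>+ s. E s * indicator {a..b} s + E s * indicator {b..c} s \<partial>lborel)"
    unfolding sq_int_def E_def by (intro nn_integral_mono) (auto simp: indicator_def)
  ultimately show ?thesis unfolding sq_int_def E_def by (simp add: nn_integral_add)
qed

lemma sq_int_diff_finite:
  fixes x y :: "real \<Rightarrow> 'w \<Rightarrow> 'h::{real_normed_vector, second_countable_topology}"
  assumes "sigma_finite_measure M" "L2loc M x" "L2loc M y"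
  shows "sq_int M (\<lambda>s \<omega>. x s \<omega> - y s \<omega>) t (t + 1) < \<infinity>"
proof -
  have "sq_int M (\<lambda>s \<omega>. x s \<omega> - y s \<omega>) t (t + 1)
      \<le> 2 * sq_int M (\<lambda>s \<omega>. x s \<omega> - 0) t (t + 1) + 2 * sq_int M (\<lambda>s \<omega>. 0 - y s \<omega>) t (t + 1)"
    using assms by (intro sq_int_triangle) (auto simp: L2loc_def)
  also have "\<dots> = 2 * sq_int M x t (t + 1) + 2 * sq_int M y t (t + 1)"
    using sq_int_cong_norm[of "\<lambda>s \<omega>. 0 - y s \<omega>" y] by simp
  also have "\<dots> < \<infinity>"
    using assms(2,3) unfolding L2loc_def by (simp add: ennreal_mult_less_top)
  finally show ?thesis .
qed

lemma ennreal_lessE: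
  assumes "A < ennreal x"
  obtains a where "A = ennreal a" "0 \<le> a" "a < x"
proof -
  have "A \<noteq> top" using assms by auto
  then obtain a where "A = ennreal a" "0 \<le> a" by (cases A) auto
  with assms that show ?thesis by (auto simp: ennreal_less_iff)
qed

lemma ennreal_quarters_sum_less:
  fixes A B :: ennreal
  assumes "A < ennreal (\<delta>/4)" "B \<le> ennreal (\<delta>/4)" "0 < \<delta>"
  shows "2 * A + 2 * B < ennreal \<delta>"
proof -
  obtain a where a: "A = ennreal a" "0 \<le> a" "a < \<delta>/4" using assms(1) by (rule ennreal_lessE)
  have "B \<noteq> top" using assms(2) by (auto simp: top_unique)
  then obtain b where b: "B = ennreal b" "0 \<le> b" by (cases B) auto
  then have "b \<le> \<delta>/4" using assms(2,3) by (simp add: ennreal_le_iff)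
  have "2 * A + 2 * B = ennreal (2 * a + 2 * b)" using a b by (simp add: ennreal_plus ennreal_mult)
  also have "\<dots> < ennreal \<delta>" using a b \<open>b \<le> \<delta>/4\<close> by (subst ennreal_less_iff) auto
  finally show ?thesis .
qed

lemma ennreal_half_of_sum:
  fixes A B :: ennreal
  assumes "ennreal x < A + B"
  shows "ennreal (x/2) \<le> A \<or> ennreal (x/2) \<le> B"
proof (rule ccontr)
  assume "\<not> ?thesis"
  then have "A < ennreal (x/2)" "B < ennreal (x/2)" by auto
  obtain a where a: "A = ennreal a" "0 \<le> a" "a < x/2" using \<open>A < _\<close> by (rule ennreal_lessE)
  obtain b where b: "B = ennreal b" "0 \<le> b" "b < x/2" using \<open>B < _\<close> by (rule ennreal_lessE)
  have "A + B = ennreal (a + b)" using a b by (simp add: ennreal_plus)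
  also have "\<dots> \<le> ennreal x" using a b by (intro ennreal_leI) simp
  finally have "A + B \<le> ennreal x" .
  with assms show False by simp
qed

text \<open>This uses both limits in the definition of AS2 (forward to y, and back to g).\<close>
lemma AS2_translates_return:
  fixes g :: "real \<Rightarrow> 'w \<Rightarrow> 'h::{real_normed_vector, second_countable_topology}"
    and a :: "nat \<Rightarrow> real"
  assumes sf: "sigma_finite_measure M" and g_AS2: "AS2 M g" and \<delta>_pos: "0 < \<delta>"
  shows "\<exists>(q :: nat \<Rightarrow> nat) c. strict_mono q \<and>
    (\<forall>\<^sub>F m in sequentially. sq_int M (\<lambda>r \<omega>. g (s + r) \<omega> - g (c + a (q m) + r) \<omega>) 0 1 < ennreal \<delta>)"
proof -
  have g_meas: "jointly_measurable M g" using g_AS2 unfolding AS2_def L2loc_def by auto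
  from g_AS2[unfolded AS2_def, THEN conjunct2, rule_format, of a] obtain q y where q: "strict_mono q" and "L2loc M y"
    and to_y: "\<forall>t. ((\<lambda>n. sq_int M (\<lambda>u \<omega>. g (u + a (q n)) \<omega> - y u \<omega>) t (t + 1)) \<longlongrightarrow> 0) sequentially"
    and to_g: "\<forall>t. ((\<lambda>n. sq_int M (\<lambda>u \<omega>. y (u - a (q n)) \<omega> - g u \<omega>) t (t + 1)) \<longlongrightarrow> 0) sequentially"
    by blast
  then have y_meas: "jointly_measurable M y" unfolding L2loc_def by auto
  have quarter: "0 < ennreal (\<delta>/4)" using \<delta>_pos by simp
  obtain n where n: "sq_int M (\<lambda>u \<omega>. y (u - a (q n)) \<omega> - g u \<omega>) s (s + 1) < ennreal (\<delta>/4)"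
    using order_tendstoD(2)[OF to_g[rule_format, of s] quarter] by (auto simp: eventually_sequentially)
  define c where "c = s - a (q n)"
  have g_near_y: "sq_int M (\<lambda>r \<omega>. g (s + r) \<omega> - y (c + r) \<omega>) 0 1 < ennreal (\<delta>/4)"
  proof -
    have "sq_int M (\<lambda>r \<omega>. g (s + r) \<omega> - y (c + r) \<omega>) 0 1
        = sq_int M (\<lambda>r \<omega>. y (s + r - a (q n)) \<omega> - g (s + r) \<omega>) 0 1"
      by (rule sq_int_cong_norm) (simp add: norm_minus_commute c_def algebra_simps)
    also have "\<dots> = sq_int M (\<lambda>u \<omega>. y (u - a (q n)) \<omega> - g u \<omega>) s (s + 1)"
      using sq_int_shift_diff[OF sf y_meas g_meas, of s "- a (q n)" 0] by simp
    finally show ?thesis using n by simp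
  qed
  have "\<forall>\<^sub>F m in sequentially.
      sq_int M (\<lambda>r \<omega>. g (s + r) \<omega> - g (c + a (q m) + r) \<omega>) 0 1 < ennreal \<delta>"
    using order_tendstoD(2)[OF to_y[rule_format, of c] quarter]
  proof eventually_elim
    case (elim m)
    have "sq_int M (\<lambda>r \<omega>. y (c + r) \<omega> - g (c + a (q m) + r) \<omega>) 0 1
        = sq_int M (\<lambda>r \<omega>. g (c + r + a (q m)) \<omega> - y (c + r) \<omega>) 0 1"
      by (rule sq_int_cong_norm) (simp add: norm_minus_commute algebra_simps)
    also have "\<dots> = sq_int M (\<lambda>u \<omega>. g (u + a (q m)) \<omega> - y u \<omega>) c (c + 1)"
      using sq_int_shift_diff[OF sf g_meas y_meas, of c "a (q m)" 0] by simp
    finally have y_near_g: "sq_int M (\<lambda>r \<omega>. y (c + r) \<omega> - g (c + a (q m) + r) \<omega>) 0 1 < ennreal (\<delta>/4)"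
      using elim by simp
    have "sq_int M (\<lambda>r \<omega>. g (s + r) \<omega> - g (c + a (q m) + r) \<omega>) 0 1
        \<le> 2 * sq_int M (\<lambda>r \<omega>. g (s + r) \<omega> - y (c + r) \<omega>) 0 1
          + 2 * sq_int M (\<lambda>r \<omega>. y (c + r) \<omega> - g (c + a (q m) + r) \<omega>) 0 1"
      by (intro sq_int_triangle sf jointly_measurable_shift g_meas y_meas)
    also have "\<dots> < ennreal \<delta>"
      using ennreal_quarters_sum_less[OF g_near_y less_imp_le[OF y_near_g] \<delta>_pos] .
    finally show ?case .
  qed
  with q show ?thesis by blast
qed

lemma AS2_relatively_dense:
  fixes g :: "real \<Rightarrow> 'w \<Rightarrow> 'h::{real_normed_vector, second_countable_topology}"
  assumes sf: "sigma_finite_measure M" and g_AS2: "AS2 M g" and \<delta>_pos: "0 < \<delta>"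
  shows "\<exists>L. \<forall>a. \<exists>\<tau>. \<bar>\<tau> - a\<bar> \<le> L \<and> sq_int M (\<lambda>r \<omega>. g (s + r) \<omega> - g (\<tau> + r) \<omega>) 0 1 < ennreal \<delta>"
proof (rule ccontr)
  define D where "D \<tau> = sq_int M (\<lambda>r \<omega>. g (s + r) \<omega> - g (\<tau> + r) \<omega>) 0 1" for \<tau>
  assume "\<not> ?thesis"
  then have "\<forall>n::nat. \<exists>a. \<forall>\<tau>. \<bar>\<tau> - a\<bar> \<le> real n \<longrightarrow> ennreal \<delta> \<le> D \<tau>"
    unfolding D_def by (auto simp: not_less)
  then obtain a where far: "\<And>n \<tau>. \<bar>\<tau> - a n\<bar> \<le> real n \<Longrightarrow> ennreal \<delta> \<le> D \<tau>"
    by metis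
  obtain q c where q: "strict_mono q"
    and return: "\<forall>\<^sub>F m in sequentially. D (c + a (q m)) < ennreal \<delta>"
    using AS2_translates_return[OF sf g_AS2 \<delta>_pos, of s a] unfolding D_def by blast
  obtain m where m: "D (c + a (q m)) < ennreal \<delta>" and "nat \<lceil>\<bar>c\<bar>\<rceil> \<le> m"
    using eventually_conj[OF return eventually_ge_at_top[of "nat \<lceil>\<bar>c\<bar>\<rceil>"]]
    by (auto simp: eventually_sequentially)
  then have "\<bar>c\<bar> \<le> real (q m)" using seq_suble[OF q, of m] by linarith
  with far[where n = "q m" and \<tau> = "c + a (q m)"] m show False by simp
qed

lemma U_TD:
  assumes "\<rho> \<in> U_T"
  shows "0 < \<rho> t" "set_integrable lborel {a..b} \<rho>"
    "filterlim (\<lambda>T. mu T \<rho>) at_top at_top" "weight_equiv \<rho> (\<lambda>t. \<rho> (t + u))"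
  using assms unfolding U_T_def U_inf_def U_set_def by auto

text \<open>A locally integrable weight is Borel measurable, as the pointwise limit of its
  integrable restrictions to [-n, n].\<close>
lemma U_T_borel_measurable:
  assumes "\<rho> \<in> U_T"
  shows "\<rho> \<in> borel_measurable borel"
proof (rule borel_measurable_LIMSEQ_real)
  show "(\<lambda>n. indicator {- real n..real n} x *\<^sub>R \<rho> x) \<longlonglongrightarrow> \<rho> x" for x
  proof (rule tendsto_eventually)
    show "\<forall>\<^sub>F n in sequentially. indicator {- real n..real n} x *\<^sub>R \<rho> x = \<rho> x"
      using eventually_ge_at_top[of "nat \<lceil>\<bar>x\<bar>\<rceil>"] by eventually_elim (auto simp: indicator_def)
  qed
  show "(\<lambda>x. indicator {- real n..real n} x *\<^sub>R \<rho> x) \<in> borel_measurable borel" for n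
    using borel_measurable_integrable U_TD(2)[OF assms] unfolding set_integrable_def by simp
qed

lemma mu_eq_nn_integral:
  assumes "\<rho> \<in> U_T"
  shows "ennreal (mu X \<rho>) = (\<integral>\<^sup>+ t. ennreal (\<rho> t) * indicator {-X..X} t \<partial>lborel)"
proof -
  have "(\<integral>\<^sup>+ t. ennreal (indicator {-X..X} t *\<^sub>R \<rho> t) \<partial>lborel) = ennreal (mu X \<rho>)"
    unfolding mu_def set_lebesgue_integral_def
    using U_TD(1,2)[OF assms] unfolding set_integrable_def
    by (intro nn_integral_eq_integral) (auto simp: less_imp_le)
  moreover have "(\<lambda>t. ennreal (indicator {-X..X} t *\<^sub>R \<rho> t)) = (\<lambda>t. ennreal (\<rho> t) * indicator {-X..X} t)"
    by (auto simp: indicator_def)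
  ultimately show ?thesis by simp
qed

lemma mu_nonneg:
  assumes "\<rho> \<in> U_T"
  shows "0 \<le> mu X \<rho>"
  using U_TD(1)[OF assms] unfolding mu_def set_lebesgue_integral_def
  by (intro integral_nonneg_AE) (auto simp: indicator_def less_imp_le)

lemma U_T_shift_bound:
  assumes "\<rho> \<in> U_T"
  shows "\<exists>C>0. \<forall>t. \<rho> (t + u) \<le> C * \<rho> t"
proof -
  have pos: "\<And>t. 0 < \<rho> t" using U_TD(1)[OF assms] .
  define m where "m = (INF t. \<rho> t / \<rho> (t + u))"
  have "(\<lambda>t. \<rho> t / \<rho> (t + u)) \<in> U_b"
    using U_TD(4)[OF assms] unfolding weight_equiv_def by blast
  then have m_pos: "0 < m" unfolding U_b_def m_def by blast
  have "bdd_below (range (\<lambda>t. \<rho> t / \<rho> (t + u)))"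
    by (rule bdd_belowI[of _ 0]) (auto simp: pos less_imp_le)
  then have m_le: "m \<le> \<rho> t / \<rho> (t + u)" for t unfolding m_def by (rule cINF_lower) simp
  have "m * \<rho> (t + u) \<le> \<rho> t" for t
    using m_le[of t] pos[of "t + u"] by (simp add: pos_le_divide_eq)
  then have "\<rho> (t + u) \<le> (1 / m) * \<rho> t" for t
    using m_pos by (simp add: pos_le_divide_eq mult.commute)
  with m_pos show ?thesis by (intro exI[of _ "1 / m"]) auto
qed

lemma U_T_finite_shifts_bound:
  assumes "\<rho> \<in> U_T" "finite U"
  shows "\<exists>C>0. \<forall>u\<in>U. \<forall>t. \<rho> (t + u) \<le> C * \<rho> t"
  using assms(2)
proof (induction U rule: finite_induct)
  case empty
  show ?case by (intro exI[of _ 1]) simp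
next
  case (insert u U)
  obtain C where C: "C > 0" "\<forall>v\<in>U. \<forall>t. \<rho> (t + v) \<le> C * \<rho> t" using insert.IH by blast
  obtain C' where C': "C' > 0" "\<forall>t. \<rho> (t + u) \<le> C' * \<rho> t" using U_T_shift_bound[OF assms(1)] by blast
  have "\<rho> (t + v) \<le> max C C' * \<rho> t" if "v \<in> insert u U" for v t
  proof -
    have "\<rho> (t + v) \<le> C * \<rho> t \<or> \<rho> (t + v) \<le> C' * \<rho> t" using that C(2) C'(2) by auto
    moreover have "C * \<rho> t \<le> max C C' * \<rho> t" "C' * \<rho> t \<le> max C C' * \<rho> t"
      using U_TD(1)[OF assms(1), of t] by (simp_all add: mult_right_mono)
    ultimately show ?thesis by linarith
  qed
  with C(1) show ?case by (intro exI[of _ "max C C'"]) auto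
qed

lemma weight_translated_interval:
  fixes \<rho> :: "real \<Rightarrow> real"
  assumes "\<rho> \<in> borel_measurable borel" "0 \<le> C" "\<And>t. 0 \<le> \<rho> t" "\<And>t. \<rho> (t + u) \<le> C * \<rho> t"
  shows "(\<integral>\<^sup>+ t. ennreal (\<rho> t) * indicator {x + u..y + u} t \<partial>lborel)
      \<le> ennreal C * (\<integral>\<^sup>+ t. ennreal (\<rho> t) * indicator {x..y} t \<partial>lborel)"
proof -
  have "(\<integral>\<^sup>+ t. ennreal (\<rho> t) * indicator {x + u..y + u} t \<partial>lborel)
      = (\<integral>\<^sup>+ t. ennreal (\<rho> (u + 1 * t)) * indicator {x + u..y + u} (u + 1 * t) \<partial>lborel)"
    using nn_integral_real_affine[of "\<lambda>t. ennreal (\<rho> t) * indicator {x + u..y + u} t" 1 u] assms(1)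
    by simp
  also have "\<dots> = (\<integral>\<^sup>+ t. ennreal (\<rho> (t + u)) * indicator {x..y} t \<partial>lborel)"
    by (intro nn_integral_cong) (auto simp: indicator_def add.commute)
  also have "\<dots> \<le> (\<integral>\<^sup>+ t. ennreal C * (ennreal (\<rho> t) * indicator {x..y} t) \<partial>lborel)"
    using assms(2-4) by (intro nn_integral_mono) (auto simp: indicator_def ennreal_mult[symmetric] ennreal_leI)
  also have "\<dots> = ennreal C * (\<integral>\<^sup>+ t. ennreal (\<rho> t) * indicator {x..y} t \<partial>lborel)"
    using assms(1) by (simp add: nn_integral_cmult)
  finally show ?thesis .
qed

lemma half_step_translates_cover:
  assumes "A \<le> b" "b \<le> A + P" "2 * P + 1 \<le> real K" "t \<in> {A..A + P}"
  shows "\<exists>j\<in>{-int K..int K}. t \<in> {b + real_of_int j / 2..b + real_of_int j / 2 + 1/2}"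
proof
  show "\<lfloor>2 * (t - b)\<rfloor> \<in> {-int K..int K}" using assms by auto linarith+
  show "t \<in> {b + real_of_int \<lfloor>2 * (t - b)\<rfloor> / 2..b + real_of_int \<lfloor>2 * (t - b)\<rfloor> / 2 + 1/2}"
    by auto linarith+
qed

lemma block_weight_comparable:
  assumes "\<rho> \<in> U_T"
  shows "\<exists>C>0. \<forall>A b. A \<le> b \<longrightarrow> b \<le> A + P \<longrightarrow>
    (\<integral>\<^sup>+ t. ennreal (\<rho> t) * indicator {A..A + P} t \<partial>lborel)
      \<le> ennreal C * (\<integral>\<^sup>+ t. ennreal (\<rho> t) * indicator {b..b + 1/2} t \<partial>lborel)"
proof -
  define K where "K = nat \<lceil>2 * P + 1\<rceil>"
  have K: "2 * P + 1 \<le> real K" unfolding K_def by linarith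
  define J where "J = {-int K..int K}"
  obtain C where C_pos: "C > 0"
    and C: "\<forall>u\<in>(\<lambda>j. real_of_int j / 2) ` J. \<forall>t. \<rho> (t + u) \<le> C * \<rho> t"
    using U_T_finite_shifts_bound[OF assms, of "(\<lambda>j. real_of_int j / 2) ` J"] unfolding J_def by blast
  have \<rho>_meas: "\<rho> \<in> borel_measurable borel" by (rule U_T_borel_measurable[OF assms])
  have \<rho>_nonneg: "\<And>t. 0 \<le> \<rho> t" using U_TD(1)[OF assms] less_imp_le by blast
  show ?thesis
  proof (intro exI[of _ "(2 * real K + 1) * C"] conjI allI impI)
    show "0 < (2 * real K + 1) * C" using C_pos by simp
    fix A b assume b: "A \<le> b" "b \<le> A + P"
    define w where "w I = (\<integral>\<^sup>+ t. ennreal (\<rho> t) * indicator I t \<partial>lborel)" for I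
    define I where "I j = {b + real_of_int j / 2..b + real_of_int j / 2 + 1/2}" for j
    have cover: "indicator {A..A + P} t \<le> (\<Sum>j\<in>J. indicator (I j) t :: ennreal)" for t
    proof (cases "t \<in> {A..A + P}")
      case True
      then obtain j where "j \<in> J" "t \<in> I j"
        using half_step_translates_cover[OF b K] unfolding J_def I_def by blast
      then show ?thesis using True member_le_sum[of j J "\<lambda>j. indicator (I j) t :: ennreal"]
        by (simp add: J_def)
    qed simp
    have "w {A..A + P} \<le> (\<integral>\<^sup>+ t. (\<Sum>j\<in>J. ennreal (\<rho> t) * indicator (I j) t) \<partial>lborel)"
      unfolding w_def
      by (intro nn_integral_mono) (simp add: sum_distrib_left[symmetric] mult_left_mono cover)
    also have "\<dots> = (\<Sum>j\<in>J. w (I j))"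
      unfolding w_def by (rule nn_integral_sum) (use \<rho>_meas in \<open>auto simp: J_def I_def\<close>)
    also have "\<dots> \<le> (\<Sum>j\<in>J. ennreal C * w {b..b + 1/2})"
    proof (rule sum_mono)
      fix j assume j: "j \<in> J"
      have "w {b + real_of_int j / 2..b + 1/2 + real_of_int j / 2} \<le> ennreal C * w {b..b + 1/2}"
        unfolding w_def using j C C_pos \<rho>_nonneg
        by (intro weight_translated_interval[OF \<rho>_meas]) auto
      moreover have "I j = {b + real_of_int j / 2..b + 1/2 + real_of_int j / 2}"
        unfolding I_def by (simp add: algebra_simps)
      ultimately show "w (I j) \<le> ennreal C * w {b..b + 1/2}" by simp
    qed
    also have "\<dots> = ennreal ((2 * real K + 1) * C) * w {b..b + 1/2}"
      using C_pos by (simp add: J_def ennreal_mult ennreal_of_nat_eq_real_of_nat mult.assoc add.commute)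
    finally show "w {A..A + P} \<le> ennreal ((2 * real K + 1) * C) * w {b..b + 1/2}" .
  qed
qed

definition block_indices :: "real \<Rightarrow> real \<Rightarrow> int set" where
  "block_indices T P = {k. - T \<le> real_of_int k * P \<and> (real_of_int k + 1) * P \<le> T}"

lemma finite_block_indices:
  assumes "0 < P"
  shows "finite (block_indices T P)"
proof (rule finite_subset)
  show "block_indices T P \<subseteq> {\<lfloor>- T / P\<rfloor>..\<lceil>T / P\<rceil>}"
  proof
    fix k assume "k \<in> block_indices T P"
    then have "- T \<le> real_of_int k * P" "real_of_int k * P \<le> T"
      unfolding block_indices_def using assms by (auto simp: algebra_simps)
    then have "- T / P \<le> real_of_int k" "real_of_int k \<le> T / P"
      using assms by (simp_all add: field_simps)
    then show "k \<in> {\<lfloor>- T / P\<rfloor>..\<lceil>T / P\<rceil>}" by (simp add: floor_le_iff le_ceiling_iff)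
  qed
qed simp

lemma mu_le_block_sum:
  assumes "\<rho> \<in> U_T" "0 < P"
  shows "ennreal (mu (T - P) \<rho>) \<le> (\<Sum>k\<in>block_indices T P.
    \<integral>\<^sup>+ t. ennreal (\<rho> t) * indicator {real_of_int k * P..real_of_int k * P + P} t \<partial>lborel)"
proof -
  define B where "B k = {real_of_int k * P..real_of_int k * P + P}" for k
  have cover: "indicator {-(T - P)..T - P} t \<le> (\<Sum>k\<in>block_indices T P. indicator (B k) t :: ennreal)"
    for t
  proof (cases "t \<in> {-(T - P)..T - P}")
    case True
    define k where "k = \<lfloor>t / P\<rfloor>"
    have "real_of_int k * P \<le> t" "t < (real_of_int k + 1) * P"
      unfolding k_def using floor_divide_lower floor_divide_upper assms(2) by blast+
    then have "k \<in> block_indices T P" "t \<in> B k"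
      using True unfolding block_indices_def B_def by (auto simp: algebra_simps)
    then show ?thesis
      using True member_le_sum[of k "block_indices T P" "\<lambda>k. indicator (B k) t :: ennreal"]
      by (simp add: finite_block_indices[OF assms(2)])
  qed simp
  have "ennreal (mu (T - P) \<rho>) \<le> (\<integral>\<^sup>+ t. (\<Sum>k\<in>block_indices T P. ennreal (\<rho> t) * indicator (B k) t) \<partial>lborel)"
    unfolding mu_eq_nn_integral[OF assms(1)]
    by (intro nn_integral_mono, subst sum_distrib_left[symmetric], rule mult_left_mono[OF cover]) simp
  also have "\<dots> = (\<Sum>k\<in>block_indices T P. \<integral>\<^sup>+ t. ennreal (\<rho> t) * indicator (B k) t \<partial>lborel)"
    using U_T_borel_measurable[OF assms(1)] by (intro nn_integral_sum) (auto simp: B_def)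
  finally show ?thesis unfolding B_def .
qed

lemma half_intervals_overlap:
  assumes "0 < P" "\<And>k. real_of_int k * P \<le> b k" "\<And>k. b k + 1/2 \<le> (real_of_int k + 1) * P"
  shows "(\<Sum>k\<in>block_indices T P. indicator {b k..b k + 1/2} t :: ennreal) \<le> 2 * indicator {-T..T} t"
proof -
  define W where "W = {k\<in>block_indices T P. t \<in> {b k..b k + 1/2}}"
  have "(\<Sum>k\<in>block_indices T P. indicator {b k..b k + 1/2} t :: ennreal)
      = (\<Sum>k\<in>block_indices T P. if t \<in> {b k..b k + 1/2} then 1 else 0)"
    by (intro sum.cong) (auto simp: indicator_def)
  also have "\<dots> = (\<Sum>k\<in>W. 1)"
    unfolding W_def by (rule sum.inter_filter[symmetric, OF finite_block_indices[OF assms(1)]])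
  also have "\<dots> \<le> 2 * indicator {-T..T} t"
  proof (cases "W = {}")
    case False
    then obtain k where k: "k \<in> block_indices T P" "t \<in> {b k..b k + 1/2}" unfolding W_def by auto
    then have "t \<in> {-T..T}" using assms(2,3)[of k] unfolding block_indices_def by auto
    have "W \<subseteq> {\<lfloor>t / P\<rfloor> - 1, \<lfloor>t / P\<rfloor>}"
    proof
      fix k assume "k \<in> W"
      then have "real_of_int k * P \<le> t" "t \<le> (real_of_int k + 1) * P"
        using assms(2,3)[of k] unfolding W_def by auto
      then have "real_of_int k \<le> t / P" "t / P \<le> real_of_int k + 1"
        using assms(1) by (simp_all add: pos_divide_le_eq pos_le_divide_eq)
      then have "k \<le> \<lfloor>t / P\<rfloor>" "\<lfloor>t / P\<rfloor> \<le> k + 1" by (simp_all add: le_floor_iff floor_le_iff)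
      then have "k = \<lfloor>t / P\<rfloor> - 1 \<or> k = \<lfloor>t / P\<rfloor>" by linarith
      then show "k \<in> {\<lfloor>t / P\<rfloor> - 1, \<lfloor>t / P\<rfloor>}" by blast
    qed
    then have "card W \<le> card {\<lfloor>t / P\<rfloor> - 1, \<lfloor>t / P\<rfloor>}" by (intro card_mono) auto
    also have "\<dots> = 2" by simp
    finally have "(of_nat (card W) :: ennreal) \<le> of_nat 2" by (simp only: of_nat_le_iff)
    then have "(\<Sum>k\<in>W. 1 :: ennreal) \<le> 2" by simp
    with \<open>t \<in> {-T..T}\<close> show ?thesis by simp
  qed simp
  finally show ?thesis .
qed

lemma mu_le_half_interval_weights:
  assumes U_T: "\<rho> \<in> U_T" and P_pos: "0 < P"
    and b_lower: "\<And>k. real_of_int k * P \<le> b k" and b_upper: "\<And>k. b k + 1/2 \<le> (real_of_int k + 1) * P"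
  shows "\<exists>C>0. \<forall>T. ennreal (mu (T - P) \<rho>) \<le> ennreal C *
    (\<integral>\<^sup>+ t. ennreal (\<rho> t) * (\<Sum>k\<in>block_indices T P. indicator {b k..b k + 1/2} t) \<partial>lborel)"
proof -
  obtain C where C_pos: "0 < C" and comparable: "\<forall>A b'. A \<le> b' \<longrightarrow> b' \<le> A + P \<longrightarrow>
      (\<integral>\<^sup>+ t. ennreal (\<rho> t) * indicator {A..A + P} t \<partial>lborel)
        \<le> ennreal C * (\<integral>\<^sup>+ t. ennreal (\<rho> t) * indicator {b'..b' + 1/2} t \<partial>lborel)"
    using block_weight_comparable[OF U_T] by blast
  have sum_integral: "(\<Sum>k\<in>block_indices T P. \<integral>\<^sup>+ t. ennreal (\<rho> t) * indicator {b k..b k + 1/2} t \<partial>lborel)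
      = (\<integral>\<^sup>+ t. ennreal (\<rho> t) * (\<Sum>k\<in>block_indices T P. indicator {b k..b k + 1/2} t) \<partial>lborel)" for T
    unfolding sum_distrib_left using U_T_borel_measurable[OF U_T]
    by (intro nn_integral_sum[symmetric]) auto
  have "ennreal (mu (T - P) \<rho>) \<le> ennreal C *
      (\<integral>\<^sup>+ t. ennreal (\<rho> t) * (\<Sum>k\<in>block_indices T P. indicator {b k..b k + 1/2} t) \<partial>lborel)" for T
  proof -
    have "ennreal (mu (T - P) \<rho>) \<le> (\<Sum>k\<in>block_indices T P.
        \<integral>\<^sup>+ t. ennreal (\<rho> t) * indicator {real_of_int k * P..real_of_int k * P + P} t \<partial>lborel)"
      by (rule mu_le_block_sum[OF U_T P_pos])
    also have "\<dots> \<le> (\<Sum>k\<in>block_indices T P.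
        ennreal C * (\<integral>\<^sup>+ t. ennreal (\<rho> t) * indicator {b k..b k + 1/2} t \<partial>lborel))"
    proof (rule sum_mono)
      fix k
      have "real_of_int k * P \<le> b k" "b k \<le> real_of_int k * P + P"
        using b_lower[of k] b_upper[of k] by (auto simp: algebra_simps)
      with comparable show "(\<integral>\<^sup>+ t. ennreal (\<rho> t) * indicator {real_of_int k * P..real_of_int k * P + P} t \<partial>lborel)
          \<le> ennreal C * (\<integral>\<^sup>+ t. ennreal (\<rho> t) * indicator {b k..b k + 1/2} t \<partial>lborel)"
        by blast
    qed
    also have "\<dots> = ennreal C *
        (\<integral>\<^sup>+ t. ennreal (\<rho> t) * (\<Sum>k\<in>block_indices T P. indicator {b k..b k + 1/2} t) \<partial>lborel)"
      by (simp only: sum_distrib_left[symmetric] sum_integral)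
    finally show ?thesis .
  qed
  with C_pos show ?thesis by blast
qed

text \<open>If G \<ge> \<beta>\<rho> on the chosen half intervals, their total \<rho>-weight is at most twice the
  G-mass of [-T, T], since they overlap at most twice.\<close>
lemma half_interval_weights_le:
  assumes U_T: "\<rho> \<in> U_T" and P_pos: "0 < P" and \<beta>_nonneg: "0 \<le> \<beta>"
    and b_lower: "\<And>k. real_of_int k * P \<le> b k" and b_upper: "\<And>k. b k + 1/2 \<le> (real_of_int k + 1) * P"
    and b_S: "\<And>k t. t \<in> {b k..b k + 1/2} \<Longrightarrow> S t"
    and G: "\<And>t. S t \<Longrightarrow> ennreal (\<beta> * \<rho> t) \<le> G t"
  shows "ennreal (\<beta> / 2) *
      (\<integral>\<^sup>+ t. ennreal (\<rho> t) * (\<Sum>k\<in>block_indices T P. indicator {b k..b k + 1/2} t) \<partial>lborel)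
    \<le> (\<integral>\<^sup>+ t. G t * indicator {-T..T} t \<partial>lborel)"
proof -
  define KS where "KS = block_indices T P"
  have pointwise: "ennreal (\<beta> / 2) * (ennreal (\<rho> t) * (\<Sum>k\<in>KS. indicator {b k..b k + 1/2} t))
      \<le> G t * indicator {-T..T} t" for t
  proof (cases "\<exists>k\<in>KS. t \<in> {b k..b k + 1/2}")
    case True
    then have "S t" using b_S by blast
    have "ennreal (\<beta> / 2) * (ennreal (\<rho> t) * (\<Sum>k\<in>KS. indicator {b k..b k + 1/2} t))
        \<le> ennreal (\<beta> / 2) * (ennreal (\<rho> t) * (2 * indicator {-T..T} t))"
      unfolding KS_def
      by (intro mult_left_mono half_intervals_overlap[OF P_pos b_lower b_upper]) auto
    also have "\<dots> = (ennreal (\<beta> / 2) * 2) * ennreal (\<rho> t) * indicator {-T..T} t"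
      by (simp add: mult_ac)
    also have "\<dots> = ennreal (\<beta> * \<rho> t) * indicator {-T..T} t"
      using \<beta>_nonneg U_TD(1)[OF U_T, of t] ennreal_mult[of "\<beta> / 2" 2]
      by (simp add: ennreal_mult)
    also have "\<dots> \<le> G t * indicator {-T..T} t"
      by (intro mult_right_mono G[OF \<open>S t\<close>]) simp
    finally show ?thesis .
  next
    case False
    then have "(\<Sum>k\<in>KS. indicator {b k..b k + 1/2} t :: ennreal) = 0"
      by (intro sum.neutral) auto
    then show ?thesis by simp
  qed
  have "ennreal (\<beta> / 2) * (\<integral>\<^sup>+ t. ennreal (\<rho> t) * (\<Sum>k\<in>KS. indicator {b k..b k + 1/2} t) \<partial>lborel)
      = (\<integral>\<^sup>+ t. ennreal (\<beta> / 2) * (ennreal (\<rho> t) * (\<Sum>k\<in>KS. indicator {b k..b k + 1/2} t)) \<partial>lborel)"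
    using U_T_borel_measurable[OF U_T] by (intro nn_integral_cmult[symmetric]) auto
  also have "\<dots> \<le> (\<integral>\<^sup>+ t. G t * indicator {-T..T} t \<partial>lborel)"
    by (intro nn_integral_mono pointwise)
  finally show ?thesis unfolding KS_def .
qed

lemma weighted_integral_lower_bound:
  assumes U_T: "\<rho> \<in> U_T" and P_pos: "0 < P" and \<beta>_pos: "0 < \<beta>"
    and blocks: "\<And>k::int. \<exists>b. real_of_int k * P \<le> b \<and> b + 1/2 \<le> (real_of_int k + 1) * P \<and>
      (\<forall>t\<in>{b..b + 1/2}. S t)"
    and G: "\<And>t. S t \<Longrightarrow> ennreal (\<beta> * \<rho> t) \<le> G t"
  shows "\<exists>\<kappa>>0. \<forall>T. ennreal (\<kappa> * mu (T - P) \<rho>) \<le> (\<integral>\<^sup>+ t. G t * indicator {-T..T} t \<partial>lborel)"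
proof -
  obtain b where b_lower: "\<And>k. real_of_int k * P \<le> b k"
    and b_upper: "\<And>k. b k + 1/2 \<le> (real_of_int k + 1) * P"
    and b_S: "\<And>k t. t \<in> {b k..b k + 1/2} \<Longrightarrow> S t"
    using blocks by metis
  define X where "X T = (\<integral>\<^sup>+ t. ennreal (\<rho> t) * (\<Sum>k\<in>block_indices T P. indicator {b k..b k + 1/2} t) \<partial>lborel)"
    for T
  obtain C where C_pos: "0 < C" and mu_le: "\<And>T. ennreal (mu (T - P) \<rho>) \<le> ennreal C * X T"
    using mu_le_half_interval_weights[OF U_T P_pos b_lower b_upper] unfolding X_def by blast
  have X_le: "ennreal (\<beta> / 2) * X T \<le> (\<integral>\<^sup>+ t. G t * indicator {-T..T} t \<partial>lborel)" for T
    unfolding X_def using \<beta>_pos by (intro half_interval_weights_le[OF U_T P_pos _ b_lower b_upper b_S G]) auto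
  have "ennreal (\<beta> / (2 * C) * mu (T - P) \<rho>) \<le> (\<integral>\<^sup>+ t. G t * indicator {-T..T} t \<partial>lborel)" for T
  proof -
    have "ennreal (\<beta> / (2 * C) * mu (T - P) \<rho>)
        = ennreal (1 / C) * ennreal (\<beta> / 2) * ennreal (mu (T - P) \<rho>)"
      using \<beta>_pos C_pos mu_nonneg[OF U_T] by (simp add: ennreal_mult[symmetric])
    also have "\<dots> \<le> ennreal (1 / C) * ennreal (\<beta> / 2) * (ennreal C * X T)"
      by (intro mult_left_mono mu_le) auto
    also have "\<dots> = (ennreal (1 / C) * ennreal C) * (ennreal (\<beta> / 2) * X T)"
      by (simp add: mult_ac)
    also have "\<dots> = ennreal (\<beta> / 2) * X T"
      using C_pos by (simp add: ennreal_mult[symmetric])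
    finally show ?thesis using X_le[of T] by simp
  qed
  moreover have "0 < \<beta> / (2 * C)" using \<beta>_pos C_pos by simp
  ultimately show ?thesis by blast
qed

lemma shifted_mu_ratio_vanishes:
  assumes U_T: "\<rho> \<in> U_T" and \<kappa>_pos: "0 < \<kappa>"
    and bound: "\<And>T. ennreal (\<kappa> * mu (T - P) \<rho>) \<le> F T"
    and F_small: "((\<lambda>T. F T / ennreal (mu T \<rho>)) \<longlongrightarrow> 0) at_top"
  shows "Limsup at_top (\<lambda>T. ereal (mu (T - P) \<rho> / mu T \<rho>)) = 0"
proof -
  define r where "r T = \<kappa> * (mu (T - P) \<rho> / mu T \<rho>)" for T
  have r_nonneg: "0 \<le> r T" for T
    unfolding r_def using \<kappa>_pos mu_nonneg[OF U_T] by simp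
  have "\<forall>\<^sub>F T in at_top. 0 < mu T \<rho>"
    using U_TD(3)[OF U_T] unfolding filterlim_at_top_dense by blast
  then have "\<forall>\<^sub>F T in at_top. ennreal (r T) \<le> F T / ennreal (mu T \<rho>)"
  proof eventually_elim
    case (elim T)
    have "ennreal (r T) = ennreal (\<kappa> * mu (T - P) \<rho>) / ennreal (mu T \<rho>)"
      unfolding r_def using elim \<kappa>_pos mu_nonneg[OF U_T] by (subst divide_ennreal) auto
    also have "\<dots> \<le> F T / ennreal (mu T \<rho>)"
      by (intro divide_right_mono_ennreal bound)
    finally show ?case .
  qed
  then have "((\<lambda>T. ennreal (r T)) \<longlongrightarrow> ennreal 0) at_top"
    using tendsto_sandwich[OF _ _ tendsto_const F_small] by simp
  then have "(r \<longlongrightarrow> 0) at_top"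
    by (subst (asm) tendsto_ennreal_iff) (auto simp: r_nonneg)
  then have "((\<lambda>T. r T / \<kappa>) \<longlongrightarrow> 0 / \<kappa>) at_top"
    using \<kappa>_pos by (intro tendsto_divide tendsto_const) auto
  then have "((\<lambda>T. ereal (mu (T - P) \<rho> / mu T \<rho>)) \<longlongrightarrow> ereal 0) at_top"
    using \<kappa>_pos by (intro tendsto_ereal) (simp add: r_def)
  then show ?thesis by (subst lim_imp_Limsup) (auto simp: zero_ereal_def)
qed

lemma SPAA0_excludes_large_blocks:
  assumes U_T: "\<rho> \<in> U_T" and ergodic: "SPAA0 M \<rho> h" and P_pos: "0 < P" and c_pos: "0 < c"
    and finite: "\<And>t. sq_int M h t (t + 1) < \<infinity>"
    and blocks: "\<And>k::int. \<exists>b. real_of_int k * P \<le> b \<and> b + 1/2 \<le> (real_of_int k + 1) * P \<and>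
      (\<forall>t\<in>{b..b + 1/2}. ennreal c \<le> sq_int M h t (t + 1))"
  shows "Limsup at_top (\<lambda>T. ereal (mu (T - P) \<rho> / mu T \<rho>)) = 0"
proof -
  define G where "G t = ennreal (sqrt (enn2real (sq_int M h t (t + 1))) * \<rho> t)" for t
  have "ennreal (sqrt c * \<rho> t) \<le> G t" if "ennreal c \<le> sq_int M h t (t + 1)" for t
  proof -
    have "c \<le> enn2real (sq_int M h t (t + 1))"
      using enn2real_mono[OF that] finite[of t] c_pos by simp
    then show ?thesis
      unfolding G_def using U_TD(1)[OF U_T, of t] by (intro ennreal_leI mult_right_mono) auto
  qed
  then obtain \<kappa> where "0 < \<kappa>" "\<And>T. ennreal (\<kappa> * mu (T - P) \<rho>) \<le> (\<integral>\<^sup>+ t. G t * indicator {-T..T} t \<partial>lborel)"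
    using weighted_integral_lower_bound[OF U_T P_pos _ blocks, of "sqrt c" G] c_pos by auto
  then show ?thesis
    using ergodic unfolding SPAA0_def G_def by (intro shifted_mu_ratio_vanishes[OF U_T]) simp_all
qed

lemma large_window_has_large_half:
  fixes h :: "real \<Rightarrow> 'w \<Rightarrow> 'h::{real_normed_vector, second_countable_topology}"
  assumes sf: "sigma_finite_measure M" and h_meas: "jointly_measurable M h"
    and large: "ennreal x < sq_int M h \<tau> (\<tau> + 1)"
  shows "\<exists>b. \<bar>b - \<tau>\<bar> \<le> 1/2 \<and> (\<forall>t\<in>{b..b + 1/2}. ennreal (x/2) \<le> sq_int M h t (t + 1))"
proof -
  have "ennreal x < sq_int M h \<tau> (\<tau> + 1/2) + sq_int M h (\<tau> + 1/2) (\<tau> + 1)"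
    using large sq_int_split[OF sf h_meas] by (rule less_le_trans)
  then consider (left) "ennreal (x/2) \<le> sq_int M h \<tau> (\<tau> + 1/2)"
    | (right) "ennreal (x/2) \<le> sq_int M h (\<tau> + 1/2) (\<tau> + 1)"
    using ennreal_half_of_sum by blast
  then show ?thesis
  proof cases
    case left
    show ?thesis
    proof (intro exI[of _ "\<tau> - 1/2"] conjI ballI)
      fix t assume "t \<in> {\<tau> - 1/2..\<tau> - 1/2 + 1/2}"
      then have "sq_int M h \<tau> (\<tau> + 1/2) \<le> sq_int M h t (t + 1)" by (intro sq_int_mono_interval) auto
      with left show "ennreal (x/2) \<le> sq_int M h t (t + 1)" by simp
    qed simp
  next
    case right
    show ?thesis
    proof (intro exI[of _ \<tau>] conjI ballI)
      fix t assume "t \<in> {\<tau>..\<tau> + 1/2}"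
      then have "sq_int M h (\<tau> + 1/2) (\<tau> + 1) \<le> sq_int M h t (t + 1)" by (intro sq_int_mono_interval) auto
      with right show "ennreal (x/2) \<le> sq_int M h t (t + 1)" by simp
    qed simp
  qed
qed

lemma window_large_near_close_translate:
  fixes f g h :: "real \<Rightarrow> 'w \<Rightarrow> 'h::{real_normed_vector, second_countable_topology}"
  assumes sf: "sigma_finite_measure M"
    and f_meas: "jointly_measurable M f" and g_meas: "jointly_measurable M g"
    and h_meas: "jointly_measurable M h"
    and decomp: "\<And>t \<omega>. f t \<omega> = g t \<omega> + h t \<omega>" and \<epsilon>_pos: "0 < \<epsilon>"
    and far: "ennreal \<epsilon> \<le> sq_int M (\<lambda>r \<omega>. g (s + r) \<omega> - f (\<tau> + r) \<omega>) 0 1"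
    and close: "sq_int M (\<lambda>r \<omega>. g (s + r) \<omega> - g (\<tau> + r) \<omega>) 0 1 < ennreal (\<epsilon>/4)"
  shows "ennreal (\<epsilon>/4) < sq_int M h \<tau> (\<tau> + 1)"
proof (rule ccontr)
  assume small: "\<not> ?thesis"
  have "ennreal \<epsilon> \<le> 2 * sq_int M (\<lambda>r \<omega>. g (s + r) \<omega> - g (\<tau> + r) \<omega>) 0 1
      + 2 * sq_int M (\<lambda>r \<omega>. g (\<tau> + r) \<omega> - f (\<tau> + r) \<omega>) 0 1"
    using far sq_int_triangle[OF sf jointly_measurable_shift[OF g_meas] jointly_measurable_shift[OF g_meas]
        jointly_measurable_shift[OF f_meas]]
    by (rule order_trans)
  also have "sq_int M (\<lambda>r \<omega>. g (\<tau> + r) \<omega> - f (\<tau> + r) \<omega>) 0 1 = sq_int M (\<lambda>r \<omega>. h (\<tau> + r) \<omega>) 0 1"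
    by (rule sq_int_cong_norm) (simp add: decomp)
  also have "\<dots> = sq_int M h \<tau> (\<tau> + 1)"
    using sq_int_shift[OF sf h_meas, of \<tau> 0 1] by simp
  also have "2 * sq_int M (\<lambda>r \<omega>. g (s + r) \<omega> - g (\<tau> + r) \<omega>) 0 1 + 2 * sq_int M h \<tau> (\<tau> + 1) < ennreal \<epsilon>"
    using small by (intro ennreal_quarters_sum_less[OF close _ \<epsilon>_pos]) simp
  finally show False by simp
qed

lemma far_from_translates_dense_large_h:
  fixes f g h :: "real \<Rightarrow> 'w \<Rightarrow> 'h::{real_normed_vector, second_countable_topology}"
  assumes sf: "sigma_finite_measure M" and f_L2: "L2loc M f" and g_AS2: "AS2 M g"
    and decomp: "\<And>t \<omega>. f t \<omega> = g t \<omega> + h t \<omega>" and \<epsilon>_pos: "0 < \<epsilon>"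
    and far: "\<And>t. ennreal \<epsilon> \<le> sq_int M (\<lambda>r \<omega>. g (s + r) \<omega> - f (t + r) \<omega>) 0 1"
  shows "\<exists>L\<ge>0. \<forall>a. \<exists>b. \<bar>b - a\<bar> \<le> L \<and> (\<forall>t\<in>{b..b + 1/2}. ennreal (\<epsilon>/8) \<le> sq_int M h t (t + 1))"
proof -
  have f_meas: "jointly_measurable M f" and g_meas: "jointly_measurable M g"
    using f_L2 g_AS2 unfolding AS2_def L2loc_def by auto
  have "h = (\<lambda>t \<omega>. f t \<omega> - g t \<omega>)" by (intro ext) (simp add: decomp)
  then have h_meas: "jointly_measurable M h" using jointly_measurable_diff[OF f_meas g_meas] by simp
  obtain L where L: "\<And>a. \<exists>\<tau>. \<bar>\<tau> - a\<bar> \<le> L \<and>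
      sq_int M (\<lambda>r \<omega>. g (s + r) \<omega> - g (\<tau> + r) \<omega>) 0 1 < ennreal (\<epsilon>/4)"
    using AS2_relatively_dense[OF sf g_AS2, of "\<epsilon>/4" s] \<epsilon>_pos by auto
  have "\<exists>b. \<bar>b - a\<bar> \<le> L + 1/2 \<and> (\<forall>t\<in>{b..b + 1/2}. ennreal (\<epsilon>/8) \<le> sq_int M h t (t + 1))" for a
  proof -
    obtain \<tau> where \<tau>: "\<bar>\<tau> - a\<bar> \<le> L"
      and close: "sq_int M (\<lambda>r \<omega>. g (s + r) \<omega> - g (\<tau> + r) \<omega>) 0 1 < ennreal (\<epsilon>/4)"
      using L by blast
    have "ennreal (\<epsilon>/4) < sq_int M h \<tau> (\<tau> + 1)"
      by (rule window_large_near_close_translate[OF sf f_meas g_meas h_meas decomp \<epsilon>_pos far close])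
    then obtain b where "\<bar>b - \<tau>\<bar> \<le> 1/2" "\<forall>t\<in>{b..b + 1/2}. ennreal (\<epsilon>/4/2) \<le> sq_int M h t (t + 1)"
      using large_window_has_large_half[OF sf h_meas] by blast
    with \<tau> show ?thesis by (intro exI[of _ b] conjI) (arith, simp)
  qed
  moreover have "0 \<le> L + 1/2" using L[of 0] by auto
  ultimately show ?thesis by blast
qed

lemma blocks_from_relative_density:
  assumes dense: "\<And>a. \<exists>b. \<bar>b - a\<bar> \<le> L \<and> (\<forall>t\<in>{b..b + 1/2}. S t)"
  shows "\<exists>b. real_of_int k * (2 * L + 2) \<le> b \<and> b + 1/2 \<le> (real_of_int k + 1) * (2 * L + 2) \<and>
    (\<forall>t\<in>{b..b + 1/2}. S t)"
proof -
  obtain b where "\<bar>b - (real_of_int k * (2 * L + 2) + L + 1)\<bar> \<le> L" "\<forall>t\<in>{b..b + 1/2}. S t"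
    using dense by blast
  moreover have "(real_of_int k + 1) * (2 * L + 2) = real_of_int k * (2 * L + 2) + 2 * L + 2"
    by (simp add: algebra_simps)
  ultimately show ?thesis by (intro exI[of _ b]) (simp add: abs_le_iff)
qed

theorem lemma3p3:
  fixes M :: "'w measure"
    and \<rho> :: "real \<Rightarrow> real"
    and f g h :: "real \<Rightarrow> 'w \<Rightarrow> 'h::{real_inner, complete_space, second_countable_topology}"
  assumes "prob_space M"
    and "complete_measure M"
    and "\<rho> \<in> U_T"
    and "\<forall>\<eta>\<ge>0. Limsup at_top (\<lambda>T. ereal (mu (T - \<eta>) \<rho> / mu T \<rho>)) > 0"
    and "WPAAS2 M \<rho> f"
    and "AS2 M g"
    and "SPAA0 M \<rho> h"
    and "\<forall>t \<omega>. f t \<omega> = g t \<omega> + h t \<omega>"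
  shows "\<forall>s. \<forall>\<epsilon>>0. \<exists>t. sq_int M (\<lambda>r \<omega>. g (s + r) \<omega> - f (t + r) \<omega>) 0 1 < ennreal \<epsilon>"
proof (rule ccontr)
  assume "\<not> ?thesis"
  then obtain s \<epsilon> where \<epsilon>_pos: "0 < \<epsilon>"
    and far: "\<And>t. ennreal \<epsilon> \<le> sq_int M (\<lambda>r \<omega>. g (s + r) \<omega> - f (t + r) \<omega>) 0 1"
    by (auto simp: not_less)
  have sf: "sigma_finite_measure M" using assms(1) by (rule prob_space_imp_sigma_finite)
  have f_L2: "L2loc M f" and g_L2: "L2loc M g"
    using assms(5,6) unfolding WPAAS2_def BS2_def AS2_def by auto
  obtain L where L_nonneg: "0 \<le> L" and dense: "\<And>a. \<exists>b. \<bar>b - a\<bar> \<le> L \<and>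
      (\<forall>t\<in>{b..b + 1/2}. ennreal (\<epsilon>/8) \<le> sq_int M h t (t + 1))"
    using far_from_translates_dense_large_h[OF sf f_L2 assms(6) assms(8)[rule_format] \<epsilon>_pos far]
    by blast
  have "h = (\<lambda>t \<omega>. f t \<omega> - g t \<omega>)" using assms(8) by (intro ext) simp
  then have h_finite: "sq_int M h t (t + 1) < \<infinity>" for t
    using sq_int_diff_finite[OF sf f_L2 g_L2] by simp
  define P where "P = 2 * L + 2"
  have P_pos: "0 < P" using L_nonneg unfolding P_def by simp
  have "Limsup at_top (\<lambda>T. ereal (mu (T - P) \<rho> / mu T \<rho>)) = 0"
    using \<epsilon>_pos blocks_from_relative_density[OF dense] unfolding P_def
    by (intro SPAA0_excludes_large_blocks[OF assms(3,7) P_pos[unfolded P_def], where c = "\<epsilon>/8"] h_finite)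
      simp_all
  moreover have "0 < Limsup at_top (\<lambda>T. ereal (mu (T - P) \<rho> / mu T \<rho>))"
    using assms(4) P_pos by simp
  ultimately show False by simp
qed

end
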